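(* Let $\phi$ be an instance of \textsc{Max (2,3)-SAT} with $n$ variables and let $T_\phi$ be the tournament instance constructed from $\phi$ as described in the context. If $\phi$ admits an assignment that satisfies at least $k$ clauses, then $T_\phi$ has a seeding whose tournament value is at least $k+n$.
   Context: Tournament model: players form a finite set of size $2^{n'}$ totally ordered by strength (stronger beats weaker). A seeding is a bijection $\sigma$ from players to $[2^{n'}]$. In round $r=1,\dots,n'$, for each block of seed positions $\{(k-1)2^r+1,\dots,k2^r\}$, the winner $a$ of its first half $\{(k-1)2^r+1,\dots,(k-1)2^r+2^{r-1}\}$ plays the winner $b$ of its second half (a single-position block is won by the player seeded there), the stronger one wins the block, and the game has value $v(a,b)$ (values do not depend on the round). The tournament value is the sum of values of all games played. \textsc{Max (2,3)-SAT} instance: a CNF formula $\phi$ with variables $x_1,\dots,x_n$ and clauses $c_1,\dots,c_m$, each clause having exactly two literals and each variable appearing in at most three clauses. Construction of $T_\phi$: let $n'$ be the smallest integer with $16n\le 2^{n'}$ and $p=2^{n'}-16n$. Players: for each $i\in[n]$, variable players $x_i,x_i^T,x_i^F$ and special players $\widehat d_i,d_i,\widetilde d_i$; for each clause $c$, a clause player $c$; dummy players $f_1,\dots,f_{10n+p-m}$. Strength order (strongest first): $\widehat d_1>d_1>\widetilde d_1>\widehat d_2>d_2>\widetilde d_2>\dots>\widehat d_n>d_n>\widetilde d_n>x_1>x_1^T>x_1^F>\dots>x_n>x_n^T>x_n^F>c_1>\dots>c_m>f_1>\dots>f_{10n+p-m}$. Round-oblivious symmetric game values ($v(a,b)=v(b,a)$):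 for each $i$, $v(x_i,x_i^T)=v(x_i,x_i^F)=1$; for each clause $c$ containing a literal of variable $x$, $v(c,x^T)=1$ if $x$ appears non-negated in $c$ and $v(c,x^F)=1$ if it appears negated; for each $i$, $v(d_i,\widehat d_i)=v(d_i,\widetilde d_i)=v(d_i,x_i)=0$; for each $i$ and every player $Y$ for which the pair value has not been set above, $v(d_i,Y)=v(x_i,Y)=-5$; all remaining pairs have value $0$. Thus the values lie in $\{0,1,-5\}$. *)

theory Defs
  imports Main
begin

text \<open>Seed positions are 1..2^N. s q is the player seeded at position q.
  winner stronger s r k is the winner of the round-r block with 0-based index k,
  i.e. of seed positions k*2^r+1 .. (k+1)*2^r.\<close>

fun winner :: "('a \<Rightarrow> 'a \<Rightarrow> bool) \<Rightarrow> (nat \<Rightarrow> 'a) \<Rightarrow> nat \<Rightarrow> nat \<Rightarrow> 'a" where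
  "winner stronger s 0 k = s (k + 1)"
| "winner stronger s (Suc r) k =
     (let a = winner stronger s r (2 * k); b = winner stronger s r (2 * k + 1)
      in if stronger a b then a else b)"

definition tournament_value ::
  "('a \<Rightarrow> 'a \<Rightarrow> int) \<Rightarrow> ('a \<Rightarrow> 'a \<Rightarrow> bool) \<Rightarrow> (nat \<Rightarrow> 'a) \<Rightarrow> nat \<Rightarrow> int" where
  "tournament_value v stronger s N =
     (\<Sum>r\<in>{1..N}. \<Sum>k<2 ^ (N - r).
        v (winner stronger s (r - 1) (2 * k)) (winner stronger s (r - 1) (2 * k + 1)))"

text \<open>A literal (i, True) is x_i, (i, False) is the negation of x_i. A clause is a pair of
  literals; a formula is a list of clauses c_1..c_m (clause c_j = cls ! (j-1)).\<close>
type_synonym literal = "nat \<times> bool"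
type_synonym clause = "literal \<times> literal"

definition clause_vars :: "clause \<Rightarrow> nat set" where
  "clause_vars c = {fst (fst c), fst (snd c)}"

definition max23sat_instance :: "nat \<Rightarrow> clause list \<Rightarrow> bool" where
  "max23sat_instance n cls \<longleftrightarrow>
     (\<forall>c\<in>set cls. fst c \<noteq> snd c \<and> clause_vars c \<subseteq> {1..n}) \<and>
     (\<forall>i\<in>{1..n}. card {j. j < length cls \<and> i \<in> clause_vars (cls ! j)} \<le> 3)"

definition lit_true :: "(nat \<Rightarrow> bool) \<Rightarrow> literal \<Rightarrow> bool" where
  "lit_true a l \<longleftrightarrow> a (fst l) = snd l"

definition clause_sat :: "(nat \<Rightarrow> bool) \<Rightarrow> clause \<Rightarrow> bool" where
  "clause_sat a c \<longleftrightarrow> lit_true a (fst c) \<or> lit_true a (snd c)"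

definition num_sat :: "clause list \<Rightarrow> (nat \<Rightarrow> bool) \<Rightarrow> nat" where
  "num_sat cls a = card {j. j < length cls \<and> clause_sat a (cls ! j)}"

datatype player =
    DHat nat | D nat | DTil nat
  | X nat | XT nat | XF nat
  | C nat
  | F nat

definition nprime :: "nat \<Rightarrow> nat" where
  "nprime n = (LEAST t. 16 * n \<le> 2 ^ t)"

definition pad :: "nat \<Rightarrow> nat" where
  "pad n = 2 ^ nprime n - 16 * n"

definition players :: "nat \<Rightarrow> clause list \<Rightarrow> player set" where
  "players n cls =
     {DHat i | i. i \<in> {1..n}} \<union> {D i | i. i \<in> {1..n}} \<union> {DTil i | i. i \<in> {1..n}} \<union>
     {X i | i. i \<in> {1..n}} \<union> {XT i | i. i \<in> {1..n}} \<union> {XF i | i. i \<in> {1..n}} \<union>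
     {C j | j. j \<in> {1..length cls}} \<union>
     {F j | j. j \<in> {1..10 * n + pad n - length cls}}"

fun rank :: "nat \<Rightarrow> nat \<Rightarrow> player \<Rightarrow> nat" where
  "rank n m (DHat i) = 3 * (i - 1)"
| "rank n m (D i) = 3 * (i - 1) + 1"
| "rank n m (DTil i) = 3 * (i - 1) + 2"
| "rank n m (X i) = 3 * n + 3 * (i - 1)"
| "rank n m (XT i) = 3 * n + 3 * (i - 1) + 1"
| "rank n m (XF i) = 3 * n + 3 * (i - 1) + 2"
| "rank n m (C j) = 6 * n + (j - 1)"
| "rank n m (F j) = 6 * n + m + (j - 1)"

definition stronger :: "nat \<Rightarrow> clause list \<Rightarrow> player \<Rightarrow> player \<Rightarrow> bool" where
  "stronger n cls a b \<longleftrightarrow> rank n (length cls) a < rank n (length cls) b"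

definition lit_in_clause :: "clause list \<Rightarrow> nat \<Rightarrow> literal \<Rightarrow> bool" where
  "lit_in_clause cls j l \<longleftrightarrow> 1 \<le> j \<and> j \<le> length cls \<and>
     (fst (cls ! (j - 1)) = l \<or> snd (cls ! (j - 1)) = l)"

fun one_pair :: "clause list \<Rightarrow> player \<Rightarrow> player \<Rightarrow> bool" where
  "one_pair cls (X i) (XT j) = (i = j)"
| "one_pair cls (X i) (XF j) = (i = j)"
| "one_pair cls (C j) (XT i) = lit_in_clause cls j (i, True)"
| "one_pair cls (C j) (XF i) = lit_in_clause cls j (i, False)"
| "one_pair cls _ _ = False"

fun zero_pair :: "player \<Rightarrow> player \<Rightarrow> bool" where
  "zero_pair (D i) (DHat j) = (i = j)"
| "zero_pair (D i) (DTil j) = (i = j)"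
| "zero_pair (D i) (X j) = (i = j)"
| "zero_pair _ _ = False"

fun is_DX :: "player \<Rightarrow> bool" where
  "is_DX (D i) = True"
| "is_DX (X i) = True"
| "is_DX _ = False"

definition game_value :: "clause list \<Rightarrow> player \<Rightarrow> player \<Rightarrow> int" where
  "game_value cls a b =
     (if one_pair cls a b \<or> one_pair cls b a then 1
      else if zero_pair a b \<or> zero_pair b a then 0
      else if is_DX a \<or> is_DX b then -5
      else 0)"

definition T_value :: "nat \<Rightarrow> clause list \<Rightarrow> (player \<Rightarrow> nat) \<Rightarrow> int" where
  "T_value n cls \<sigma> =
     tournament_value (game_value cls) (stronger n cls)
       (inv_into (players n cls) \<sigma>) (nprime n)"

end

theory Submission
  imports Defs
begin

text \<open>
  Seed \<open>T\<^sub>\<phi>\<close> in brackets of 16, one per variable \<open>j\<close>: \<open>X j\<close> next to the literal player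
  made false by the assignment, then \<open>D j\<close>, \<open>DTil j\<close>, \<open>DHat j\<close>, and the literal player made
  true, followed by the (at most three) satisfied clauses whose first true literal is on \<open>j\<close>,
  interleaved with dummies. Inside such a bracket no game is worth \<open>-5\<close>: \<open>X j\<close> beats its false
  literal (value 1), \<open>D j\<close> eliminates \<open>DTil j\<close> and \<open>X j\<close> and then loses to \<open>DHat j\<close> (value 0
  each), and the true literal meets its clause players in rounds 1, 2 and 3 (value 1 each).
  All other players are clause or dummy players and the bracket winners are \<open>DHat j\<close> or such
  players, so every remaining game is worth 0 or 1. Hence the tournament value is at least
  \<open>n\<close> plus the number of satisfied clauses.
\<close>

section \<open>Knockout brackets\<close>

lemma winner_cong:
  assumes "\<And>q. k * 2 ^ r < q \<Longrightarrow> q \<le> (k + 1) * 2 ^ r \<Longrightarrow> s q = s' q"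
  shows "winner st s r k = winner st s' r k"
  using assms
proof (induction r arbitrary: k)
  case (Suc r)
  have "winner st s r (2 * k + b) = winner st s' r (2 * k + b)" if "b \<le> 1" for b
    using that by (intro Suc.IH Suc.prems) (auto simp: algebra_simps le_Suc_eq)
  from this[of 0] this[of 1] show ?case by (simp add: Let_def)
qed simp

lemma winner_mem: "winner st s r k \<in> s ` {k * 2 ^ r <.. (k + 1) * 2 ^ r}"
proof (induction r arbitrary: k)
  case (Suc r)
  have half: "{(2 * k + b) * 2 ^ r <.. (2 * k + b + 1) * 2 ^ r} \<subseteq> {k * 2 ^ Suc r <.. (k + 1) * 2 ^ Suc r}"
    if "b \<le> 1" for b
    using that by (auto simp: algebra_simps le_Suc_eq)
  with Suc.IH[of "2 * k"] Suc.IH[of "2 * k + 1"] show ?case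
    by (auto simp: Let_def simp del: mult_Suc_right dest!: half[of 0] half[of 1])
qed simp

lemma block_end_le_pow:
  fixes k :: nat
  assumes "k < 2 ^ (N - r)" "r \<le> N"
  shows "(k + 1) * 2 ^ r \<le> 2 ^ N"
proof -
  have "(k + 1) * 2 ^ r \<le> 2 ^ (N - r) * 2 ^ r"
    using assms(1) by (intro mult_right_mono) auto
  also have "\<dots> = 2 ^ N"
    using assms(2) by (simp flip: power_add)
  finally show ?thesis .
qed

lemma winner_eq_strongest:
  assumes st: "\<And>x y. st x y \<longleftrightarrow> f x < (f y :: 'b :: linorder)"
    and "k * 2 ^ r < q0" "q0 \<le> (k + 1) * 2 ^ r"
    and "\<And>q. k * 2 ^ r < q \<Longrightarrow> q \<le> (k + 1) * 2 ^ r \<Longrightarrow> q \<noteq> q0 \<Longrightarrow> f (s q0) < f (s q)"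
  shows "winner st s r k = s q0"
  using assms(2-)
proof (induction r arbitrary: k)
  case 0
  then have "q0 = k + 1"
    by simp
  then show ?case
    by simp
next
  case (Suc r)
  let ?L = "winner st s r (2 * k)" and ?R = "winner st s r (2 * k + 1)"
  have left: "{2 * k * 2 ^ r <.. (2 * k + 1) * 2 ^ r} \<subseteq> {k * 2 ^ Suc r <.. (k + 1) * 2 ^ Suc r}"
    and right: "{(2 * k + 1) * 2 ^ r <.. (2 * k + 1 + 1) * 2 ^ r} \<subseteq> {k * 2 ^ Suc r <.. (k + 1) * 2 ^ Suc r}"
    by (auto simp: algebra_simps)
  show ?case
  proof (cases "q0 \<le> (2 * k + 1) * 2 ^ r")
    case True
    have "?L = s q0"
      using True Suc.prems left by (intro Suc.IH) auto
    moreover obtain q where "?R = s q" "(2 * k + 1) * 2 ^ r < q" "q \<le> (2 * k + 1 + 1) * 2 ^ r"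
      using winner_mem[of st s r "2 * k + 1"] by auto
    ultimately have "st ?L ?R"
      using True Suc.prems(3)[of q] right by (auto simp: st)
    with \<open>?L = s q0\<close> show ?thesis
      by (simp add: Let_def)
  next
    case False
    have "?R = s q0"
      using False Suc.prems right by (intro Suc.IH) (auto simp: algebra_simps)
    moreover obtain q where "?L = s q" "2 * k * 2 ^ r < q" "q \<le> (2 * k + 1) * 2 ^ r"
      using winner_mem[of st s r "2 * k"] by auto
    ultimately have "\<not> st ?L ?R"
      using False Suc.prems(3)[of q] left by (auto simp: st)
    with \<open>?R = s q0\<close> show ?thesis
      by (simp add: Let_def)
  qed
qed

lemma winner_shift: "winner st s r (j + k) = winner st (\<lambda>q. s (j * 2 ^ r + q)) r k"
proof (induction r arbitrary: j k)
  case (Suc r)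
  have "j * 2 ^ Suc r = 2 * j * 2 ^ r"
    by simp
  then show ?case
    using Suc.IH[of "2 * j" "2 * k"] Suc.IH[of "2 * j" "2 * k + 1"]
    by (simp add: Let_def algebra_simps)
qed simp

lemma winner_add_levels: "winner st s (m + l) k = winner st (\<lambda>q. winner st s m (q - 1)) l k"
  by (induction l arbitrary: k) (simp_all add: Let_def)

definition match_value ::
  "('a \<Rightarrow> 'a \<Rightarrow> int) \<Rightarrow> ('a \<Rightarrow> 'a \<Rightarrow> bool) \<Rightarrow> (nat \<Rightarrow> 'a) \<Rightarrow> nat \<Rightarrow> nat \<Rightarrow> int" where
  "match_value v st s l k = v (winner st s l (2 * k)) (winner st s l (2 * k + 1))"

lemma tournament_value_by_level:
  "tournament_value v st s N = (\<Sum>l<N. \<Sum>k<2 ^ (N - Suc l). match_value v st s l k)"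
  unfolding tournament_value_def match_value_def
  by (simp only: One_nat_def sum.atLeast1_atMost_eq) simp

lemma tournament_value_cong:
  assumes "\<And>q. 0 < q \<Longrightarrow> q \<le> 2 ^ N \<Longrightarrow> s q = s' q"
  shows "tournament_value v st s N = tournament_value v st s' N"
  unfolding tournament_value_by_level match_value_def
proof (intro sum.cong refl)
  fix l k :: nat assume "l \<in> {..<N}" "k \<in> {..<2 ^ (N - Suc l)}"
  then have "(2 * k + 1 + 1) * 2 ^ l \<le> 2 ^ N"
    using block_end_le_pow[of k N "Suc l"] by (simp add: algebra_simps)
  then have "winner st s l (2 * k + b) = winner st s' l (2 * k + b)" if "b \<le> 1" for b
    using that by (intro winner_cong assms) (auto simp: algebra_simps le_Suc_eq)
  from this[of 0] this[of 1]
  show "v (winner st s l (2 * k)) (winner st s l (2 * k + 1)) =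
      v (winner st s' l (2 * k)) (winner st s' l (2 * k + 1))"
    by simp
qed

lemma match_value_shift:
  assumes "l < m"
  shows "match_value v st s l (i * 2 ^ (m - Suc l) + k) = match_value v st (\<lambda>q. s (i * 2 ^ m + q)) l k"
proof -
  have "m = (m - Suc l) + Suc l"
    using assms by simp
  then have "(2::nat) ^ m = 2 ^ (m - Suc l) * 2 * 2 ^ l"
    by (metis power_add power_Suc mult.assoc)
  then have "winner st s l (i * 2 ^ (m - Suc l) * 2 + b) = winner st (\<lambda>q. s (i * 2 ^ m + q)) l b" for b
    by (simp add: winner_shift mult.assoc)
  from this[of "2 * k"] this[of "2 * k + 1"] show ?thesis
    by (simp add: match_value_def algebra_simps)
qed

lemma sum_atLeastLessThan_add:
  "(\<Sum>k\<in>{a..<a + c}. f k) = (\<Sum>k<c. f (a + k))" for a c :: nat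
  using sum.shift_bounds_nat_ivl[of f 0 a c] by (simp add: atLeast0LessThan add.commute)

lemma sum_lessThan_add:
  "(\<Sum>l<m + d. f l) = (\<Sum>l<m. f l) + (\<Sum>l<d. f (m + l))" for f :: "nat \<Rightarrow> 'b :: comm_monoid_add"
  by (induction d) (simp_all add: add.assoc)

lemma tournament_value_split:
  assumes "m \<le> N"
  shows "tournament_value v st s N =
    (\<Sum>i<2 ^ (N - m). tournament_value v st (\<lambda>q. s (i * 2 ^ m + q)) m) +
    tournament_value v st (\<lambda>q. winner st s m (q - 1)) (N - m)"
proof -
  obtain d where N: "N = m + d"
    using assms le_Suc_ex by blast
  have lower: "(\<Sum>k<2 ^ (m + d - Suc l). match_value v st s l k) =
      (\<Sum>i<2 ^ d. \<Sum>k<2 ^ (m - Suc l). match_value v st (\<lambda>q. s (i * 2 ^ m + q)) l k)"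
    if "l < m" for l
  proof -
    let ?c = "2 ^ (m - Suc l) :: nat"
    have "2 ^ (m + d - Suc l) = 2 ^ d * ?c"
      using that by (simp flip: power_add)
    then have "(\<Sum>k<2 ^ (m + d - Suc l). match_value v st s l k) =
        (\<Sum>i<2 ^ d. \<Sum>k\<in>{i * ?c..<i * ?c + ?c}. match_value v st s l k)"
      by (simp add: sum.nat_group)
    also have "\<dots> = (\<Sum>i<2 ^ d. \<Sum>k<?c. match_value v st s l (i * ?c + k))"
      by (simp only: sum_atLeastLessThan_add)
    finally show ?thesis
      using that by (simp add: match_value_shift)
  qed
  have upper: "match_value v st s (m + l) k = match_value v st (\<lambda>q. winner st s m (q - 1)) l k" for l k
    by (simp add: match_value_def winner_add_levels)
  show ?thesis
    unfolding tournament_value_by_level N sum_lessThan_add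
    by (simp add: lower upper sum.swap[of _ "{..<2 ^ d}"])
qed

lemma tournament_value_nonneg:
  assumes "\<And>q q'. 0 < q \<Longrightarrow> q \<le> 2 ^ N \<Longrightarrow> 0 < q' \<Longrightarrow> q' \<le> 2 ^ N \<Longrightarrow> 0 \<le> v (s q) (s q')"
  shows "0 \<le> tournament_value v st s N"
  unfolding tournament_value_by_level
proof (intro sum_nonneg)
  fix l k :: nat assume "l \<in> {..<N}" "k \<in> {..<2 ^ (N - Suc l)}"
  then have "(2 * k + 1 + 1) * 2 ^ l \<le> 2 ^ N"
    using block_end_le_pow[of k N "Suc l"] by (simp add: algebra_simps)
  moreover obtain q where "winner st s l (2 * k) = s q" "2 * k * 2 ^ l < q" "q \<le> (2 * k + 1) * 2 ^ l"
    using winner_mem[of st s l "2 * k"] by fastforce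
  moreover obtain q' where "winner st s l (2 * k + 1) = s q'" "(2 * k + 1) * 2 ^ l < q'" "q' \<le> (2 * k + 1 + 1) * 2 ^ l"
    using winner_mem[of st s l "2 * k + 1"] by fastforce
  ultimately show "0 \<le> match_value v st s l k"
    unfolding match_value_def by (auto intro!: assms)
qed

lemma extend_to_bij_betw:
  assumes "finite A" "finite B" "card A = card B" "inj_on f S" "S \<subseteq> A" "f ` S \<subseteq> B"
  obtains g where "bij_betw g A B" "\<And>x. x \<in> S \<Longrightarrow> g x = f x"
proof -
  have "card (A - S) = card (B - f ` S)"
    using assms finite_subset[of S A] by (simp add: card_Diff_subset card_image)
  then obtain h where "bij_betw h (A - S) (B - f ` S)"
    using assms(1,2) finite_same_card_bij by blast
  then have "bij_betw (\<lambda>x. if x \<in> S then f x else h x) (S \<union> (A - S)) (f ` S \<union> (B - f ` S))"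
    using assms(4) by (intro bij_betw_disjoint_Un) (auto simp: inj_on_imp_bij_betw)
  moreover have "S \<union> (A - S) = A" "f ` S \<union> (B - f ` S) = B"
    using assms(5,6) by auto
  ultimately show thesis
    using that[of "\<lambda>x. if x \<in> S then f x else h x"] by simp
qed

section \<open>The bracket of one variable\<close>

fun low :: "player \<Rightarrow> bool" where
  "low (C j) = True"
| "low (F j) = True"
| "low _ = False"

lemma rank_low_ge: "low y \<Longrightarrow> 6 * n \<le> rank n m y"
  by (cases y) auto

lemma low_not_DX: "low y \<Longrightarrow> \<not> is_DX y"
  by (cases y) auto

lemma game_value_nonneg:
  "(\<not> is_DX a \<and> \<not> is_DX b) \<or> zero_pair a b \<or> zero_pair b a \<or> one_pair cls a b \<Longrightarrow>
    0 \<le> game_value cls a b"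
  by (auto simp: game_value_def)

lemma game_value_one: "one_pair cls a b \<Longrightarrow> game_value cls a b = 1"
  by (simp add: game_value_def)

locale variable_gadget =
  fixes n :: nat and cls :: "clause list" and j :: nat and g :: "nat \<Rightarrow> player" and c :: nat
  assumes var_range: "j \<in> {1..n}"
    and X_at: "g 1 = X j" and D_at: "g 3 = D j" and DTil_at: "g 4 = DTil j" and DHat_at: "g 5 = DHat j"
    and literals_at: "{g 2, g 9} = {XT j, XF j}"
    and low_at: "q \<in> {6, 7, 8, 10, 11, 13} \<Longrightarrow> low (g q)"
    and F_at: "q \<in> {12, 14, 15, 16} \<Longrightarrow> \<exists>f>0. g q = F f"
    and clauses_le: "c \<le> 3"
    and clause_at: "t < c \<Longrightarrow> \<exists>c'\<in>{1..length cls}. g ([10, 11, 13] ! t) = C c' \<and> one_pair cls (C c') (g 9)"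
begin

abbreviation "R \<equiv> rank n (length cls)"
abbreviation "win \<equiv> winner (stronger n cls) g"
abbreviation "game \<equiv> match_value (game_value cls) (stronger n cls) g"

lemma win_eq:
  assumes "k * 2 ^ l < q0" "q0 \<le> (k + 1) * 2 ^ l"
    and "\<And>q. k * 2 ^ l < q \<Longrightarrow> q \<le> (k + 1) * 2 ^ l \<Longrightarrow> q \<noteq> q0 \<Longrightarrow> R (g q0) < R (g q)"
  shows "win l k = g q0"
  using assms by (intro winner_eq_strongest[where f = R]) (auto simp: stronger_def)

lemma low_after_DHat:
  assumes "5 < q" "q \<le> 16" "q \<noteq> 9"
  shows "low (g q)"
proof -
  have "q \<in> {6, 7, 8, 10, 11, 13} \<or> q \<in> {12, 14, 15, 16}"
    using assms [[linarith_neq_limit = 11]] by simp linarith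
  then show ?thesis
    using low_at F_at by fastforce
qed

lemma literal_at: "g 2 = XT j \<or> g 2 = XF j" "g 9 = XT j \<or> g 9 = XF j"
  using literals_at by (auto simp: doubleton_eq_iff)

lemma not_DX_at: "4 < q \<Longrightarrow> q \<le> 16 \<Longrightarrow> \<not> is_DX (g q)"
  using DHat_at literal_at(2) low_after_DHat[of q] low_not_DX by (cases "q = 5 \<or> q = 9") auto

lemma rank_DHat_least: "0 < q \<Longrightarrow> q \<le> 16 \<Longrightarrow> q \<noteq> 5 \<Longrightarrow> R (DHat j) < R (g q)"
proof -
  assume q: "0 < q" "q \<le> 16" "q \<noteq> 5"
  have "q \<in> {1, 2, 3, 4, 9} \<or> 5 < q \<and> q \<noteq> 9"
    using q by auto
  then show ?thesis
    using q var_range X_at D_at DTil_at literal_at low_after_DHat[of q] rank_low_ge[of "g q" n "length cls"]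
    by auto
qed

lemma rank_D_least: "0 < q \<Longrightarrow> q \<le> 4 \<Longrightarrow> q \<noteq> 3 \<Longrightarrow> R (D j) < R (g q)"
proof -
  assume q: "0 < q" "q \<le> 4" "q \<noteq> 3"
  then have "q \<in> {1, 2, 4}"
    by auto
  then show ?thesis
    using var_range X_at DTil_at literal_at by auto
qed

lemma rank_true_literal_least: "9 < q \<Longrightarrow> q \<le> 16 \<Longrightarrow> R (g 9) < R (g q)"
  using literal_at(2) var_range low_after_DHat[of q] rank_low_ge[of "g q" n "length cls"] by auto

lemma win_X: "win 1 0 = X j"
proof -
  have "R (g 1) < R (g q)" if "0 < q" "q \<le> 2" "q \<noteq> 1" for q
    using that X_at literal_at(1) by (cases "q = 2") auto
  then show ?thesis
    using win_eq[of 0 1 1] X_at by simp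
qed

lemma win_D: "win 1 1 = D j" "win 2 0 = D j"
  using win_eq[of 1 1 3] win_eq[of 0 2 3] rank_D_least D_at by auto

lemma win_DHat: "win 2 1 = DHat j" "win 3 0 = DHat j" "win 4 0 = DHat j"
  using win_eq[of 1 2 5] win_eq[of 0 3 5] win_eq[of 0 4 5] rank_DHat_least DHat_at by auto

lemma win_true_literal: "win 1 4 = g 9" "win 2 2 = g 9"
  using win_eq[of 4 1 9] win_eq[of 2 2 9] rank_true_literal_least by auto

lemma clause_player_at:
  assumes "t < c"
  obtains c' where "g ([10, 11, 13] ! t) = C c'" "game_value cls (g 9) (C c') = 1"
    "\<And>q. q \<in> {12, 14, 15, 16} \<Longrightarrow> R (C c') < R (g q)"
proof -
  obtain c' where c': "c' \<in> {1..length cls}" "g ([10, 11, 13] ! t) = C c'" "one_pair cls (C c') (g 9)"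
    using clause_at[OF assms] by blast
  moreover have "R (C c') < R (g q)" if "q \<in> {12, 14, 15, 16}" for q
    using F_at[OF that] c'(1) by auto
  ultimately show thesis
    using that by (auto simp: game_value_def)
qed

lemma game_X_literal: "game 0 0 = 1"
proof -
  have "game 0 0 = game_value cls (g 1) (g 2)"
    by (simp add: match_value_def numeral_2_eq_2 One_nat_def)
  moreover have "one_pair cls (g 1) (g 2)"
    using X_at literal_at(1) by auto
  ultimately show ?thesis
    by (simp add: game_value_one)
qed

lemma win_not_DX:
  assumes "4 \<le> k * 2 ^ l" "(k + 1) * 2 ^ l \<le> 16"
  shows "\<not> is_DX (win l k)"
proof -
  obtain q where "win l k = g q" "k * 2 ^ l < q" "q \<le> (k + 1) * 2 ^ l"
    using winner_mem[of "stronger n cls" g l k] by fastforce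
  then show ?thesis
    using assms not_DX_at by auto
qed

lemma game_nonneg:
  assumes "l < 4" "k < 2 ^ (3 - l)"
  shows "0 \<le> game l k"
proof -
  have bound: "(2 * k + 1 + 1) * 2 ^ l \<le> 16"
    using block_end_le_pow[of k 4 "Suc l"] assms by (simp add: algebra_simps)
  \<comment> \<open>The DX players sit at seeds 1 and 3, so only the games with \<open>k = 0\<close> and the game of
    seeds 3 and 4 can involve one of them.\<close>
  consider "k = 0" | "l = 0" "k = 1" | "4 \<le> 2 * k * 2 ^ l"
  proof (cases "k = 0 \<or> (l = 0 \<and> k = 1)")
    case False
    then have "2 \<le> k \<or> k = 1 \<and> 2 \<le> (2::nat) ^ l"
      using power_increasing[of 1 l "2::nat"] by auto
    then have "2 \<le> k * 2 ^ l"
      using mult_le_mono[of 2 k 1 "2 ^ l"] by auto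
    with that show ?thesis
      by simp
  qed (use that in blast)+
  then show ?thesis
  proof cases
    case 1
    with assms(1) consider "l = 0" | "l = 1" | "l = 2" | "l = 3"
      by linarith
    then show ?thesis
    proof cases
      case 4
      have "\<not> is_DX (win 3 1)"
        by (rule win_not_DX) simp_all
      with 1 4 show ?thesis
        using win_DHat by (simp add: match_value_def game_value_nonneg)
    qed (use 1 game_X_literal win_X win_D win_DHat in \<open>simp_all add: match_value_def game_value_nonneg\<close>)
  next
    case 2
    then show ?thesis
      using D_at DTil_at by (simp add: match_value_def game_value_nonneg)
  next
    case 3
    moreover have "(2 * k + 1) * 2 ^ l \<le> 16" "2 * k * 2 ^ l \<le> (2 * k + 1) * 2 ^ l"
      using bound by (simp_all add: algebra_simps)
    ultimately have "\<not> is_DX (win l (2 * k))" "\<not> is_DX (win l (2 * k + 1))"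
      using bound win_not_DX[of "2 * k" l] win_not_DX[of "2 * k + 1" l] by simp_all
    then show ?thesis
      by (simp add: match_value_def game_value_nonneg)
  qed
qed

lemma clause_games:
  "0 < c \<Longrightarrow> game 0 4 = 1" "1 < c \<Longrightarrow> game 1 2 = 1" "2 < c \<Longrightarrow> game 2 1 = 1"
proof -
  assume "0 < c"
  then obtain c' where "g 10 = C c'" "game_value cls (g 9) (C c') = 1"
    using clause_player_at[of 0] by auto
  then show "game 0 4 = 1"
    by (simp add: match_value_def)
next
  assume "1 < c"
  then obtain c' where c': "g 11 = C c'" "game_value cls (g 9) (C c') = 1" "R (C c') < R (g 12)"
    using clause_player_at[of 1] by auto
  have "R (g 11) < R (g q)" if "10 < q" "q \<le> 12" "q \<noteq> 11" for q
    using that c' by (cases "q = 12") auto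
  then have "win 1 5 = C c'"
    using win_eq[of 5 1 11] c'(1) by simp
  then show "game 1 2 = 1"
    using win_true_literal c'(2) by (simp add: match_value_def)
next
  assume "2 < c"
  then obtain c' where c': "g 13 = C c'" "game_value cls (g 9) (C c') = 1"
    "\<And>q. q \<in> {12, 14, 15, 16} \<Longrightarrow> R (C c') < R (g q)"
    using clause_player_at[of 2] by auto
  have "R (g 13) < R (g q)" if "12 < q" "q \<le> 16" "q \<noteq> 13" for q
    using that c' by (cases "q \<in> {14, 15, 16}") auto
  then have "win 2 3 = C c'"
    using win_eq[of 3 2 13] c'(1) by simp
  then show "game 2 1 = 1"
    using win_true_literal c'(2) by (simp add: match_value_def)
qed

theorem tournament_value_ge: "int (1 + c) \<le> tournament_value (game_value cls) (stronger n cls) g 4"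
proof -
  let ?S = "SIGMA l:{..<4}. {..<2 ^ (3 - l)}"
  have "game 0 0 + game 0 4 + game 1 2 + game 2 1 = (\<Sum>(l, k)\<in>{(0, 0), (0, 4), (1, 2), (2, 1)}. game l k)"
    by simp
  also have "\<dots> \<le> (\<Sum>(l, k)\<in>?S. game l k)"
    by (rule sum_mono2) (auto intro: game_nonneg)
  also have "\<dots> = tournament_value (game_value cls) (stronger n cls) g 4"
    by (simp add: tournament_value_by_level sum.Sigma)
  finally have "game 0 0 + game 0 4 + game 1 2 + game 2 1 \<le> tournament_value (game_value cls) (stronger n cls) g 4" .
  moreover have "int (1 + c) \<le> game 0 0 + game 0 4 + game 1 2 + game 2 1"
    using clauses_le game_X_literal clause_games game_nonneg[of 0 4] game_nonneg[of 1 2] game_nonneg[of 2 1]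
    by (cases "c = 0 \<or> c = 1 \<or> c = 2") auto
  ultimately show ?thesis
    by linarith
qed

end

section \<open>Seeding \<open>T\<^sub>\<phi>\<close> from an assignment\<close>

lemma nprime_ge: "16 * n \<le> 2 ^ nprime n"
  unfolding nprime_def
proof (rule LeastI)
  show "16 * n \<le> 2 ^ (n + 4)"
    using less_exp[of n] by (simp add: power_add)
qed

lemma nprime_ge_4: "0 < n \<Longrightarrow> 4 \<le> nprime n"
proof (rule ccontr)
  assume "0 < n" "\<not> 4 \<le> nprime n"
  then have "(2::nat) ^ nprime n \<le> 2 ^ 3"
    by (intro power_increasing) auto
  with \<open>0 < n\<close> nprime_ge[of n] show False
    by simp
qed

lemma players_eq: "players n cls =
  DHat ` {1..n} \<union> D ` {1..n} \<union> DTil ` {1..n} \<union> X ` {1..n} \<union> XT ` {1..n} \<union> XF ` {1..n}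
  \<union> C ` {1..length cls} \<union> F ` {1..10 * n + pad n - length cls}"
  unfolding players_def by blast

lemma card_players: "card (players n cls) = 6 * n + length cls + (10 * n + pad n - length cls)"
  unfolding players_eq
  by (subst card_Un_disjoint, auto simp: card_image inj_on_def)+

locale reduction =
  fixes n :: nat and cls :: "clause list" and a :: "nat \<Rightarrow> bool"
  assumes is_instance: "max23sat_instance n cls"
begin

definition satisfied :: "nat set" where
  "satisfied = {j. j < length cls \<and> clause_sat a (cls ! j)}"

definition witness :: "nat \<Rightarrow> nat" where
  "witness j = (if lit_true a (fst (cls ! j)) then fst (fst (cls ! j)) else fst (snd (cls ! j)))"

definition witnessed :: "nat \<Rightarrow> nat set" where
  "witnessed i = {j \<in> satisfied. witness j = i}"

definition witness_list :: "nat \<Rightarrow> nat list" where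
  "witness_list i = sorted_list_of_set (witnessed i)"

definition true_lit :: "nat \<Rightarrow> player" where
  "true_lit i = (if a i then XT i else XF i)"

definition false_lit :: "nat \<Rightarrow> player" where
  "false_lit i = (if a i then XF i else XT i)"

lemma clause_vars_range: "j < length cls \<Longrightarrow> clause_vars (cls ! j) \<subseteq> {1..n}"
  using is_instance unfolding max23sat_instance_def by auto

lemma witness_in_clause: "j < length cls \<Longrightarrow> witness j \<in> clause_vars (cls ! j)"
  by (simp add: witness_def clause_vars_def)

lemma witness_range: "j < length cls \<Longrightarrow> witness j \<in> {1..n}"
  using witness_in_clause clause_vars_range by blast

lemma witnessed_subset: "witnessed i \<subseteq> {j. j < length cls \<and> i \<in> clause_vars (cls ! j)}"
  using witness_in_clause by (auto simp: witnessed_def satisfied_def)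

lemma finite_witnessed: "finite (witnessed i)"
  by (rule finite_subset[OF witnessed_subset]) auto

lemma card_witnessed_le: "card (witnessed i) \<le> 3"
proof (cases "i \<in> {1..n}")
  case True
  have "card (witnessed i) \<le> card {j. j < length cls \<and> i \<in> clause_vars (cls ! j)}"
    by (rule card_mono[OF _ witnessed_subset]) auto
  also have "\<dots> \<le> 3"
    using True is_instance unfolding max23sat_instance_def by auto
  finally show ?thesis .
next
  case False
  then have "witnessed i = {}"
    using witness_range by (auto simp: witnessed_def satisfied_def)
  then show ?thesis
    by simp
qed

lemma witnessed_one_pair:
  assumes "j \<in> witnessed i"
  shows "one_pair cls (C (Suc j)) (true_lit i)"
proof -
  have j: "j < length cls" "clause_sat a (cls ! j)" "witness j = i"
    using assms by (auto simp: witnessed_def satisfied_def)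
  then have "fst (cls ! j) = (i, a i) \<or> snd (cls ! j) = (i, a i)"
    by (auto simp: witness_def clause_sat_def lit_true_def split: if_splits intro: prod_eqI)
  then show ?thesis
    using j(1) by (cases "a i") (auto simp: true_lit_def lit_in_clause_def)
qed

lemma length_cls_le: "length cls \<le> 3 * n"
proof -
  let ?occ = "\<lambda>i. {j. j < length cls \<and> i \<in> clause_vars (cls ! j)}"
  have "{..<length cls} \<subseteq> (\<Union>i\<in>{1..n}. ?occ i)"
    using witness_in_clause witness_range by blast
  then have "length cls \<le> card (\<Union>i\<in>{1..n}. ?occ i)"
    using card_mono[of "\<Union>i\<in>{1..n}. ?occ i" "{..<length cls}"] by auto
  also have "\<dots> \<le> (\<Sum>i\<in>{1..n}. card (?occ i))"
    by (rule card_UN_le) simp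
  also have "\<dots> \<le> (\<Sum>i\<in>{1..n}. 3)"
    by (rule sum_mono) (use is_instance in \<open>auto simp: max23sat_instance_def\<close>)
  finally show ?thesis
    by simp
qed

lemma card_players_eq: "card (players n cls) = 2 ^ nprime n"
  using card_players[of n cls] length_cls_le nprime_ge[of n] by (simp add: pad_def)

lemma card_satisfied: "card satisfied = (\<Sum>i\<in>{1..n}. card (witnessed i))"
proof -
  have "satisfied = (\<Union>i\<in>{1..n}. witnessed i)"
    using witness_range by (auto simp: witnessed_def satisfied_def)
  moreover have "card (\<Union>i\<in>{1..n}. witnessed i) = (\<Sum>i\<in>{1..n}. card (witnessed i))"
    by (rule card_UN_disjoint) (use finite_witnessed in \<open>auto simp: witnessed_def\<close>)
  ultimately show ?thesis
    by simp
qed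

lemma length_witness_list: "length (witness_list i) = card (witnessed i)"
  by (simp add: witness_list_def finite_witnessed)

lemma witness_list_nth:
  "t < length (witness_list i) \<Longrightarrow> witness_list i ! t \<in> witnessed i"
  using finite_witnessed by (metis witness_list_def nth_mem set_sorted_list_of_set)

definition clause_slot :: "nat \<Rightarrow> nat \<Rightarrow> player option" where
  "clause_slot i t =
     (if t < length (witness_list i) then Some (C (Suc (witness_list i ! t))) else None)"

text \<open>Bracket \<open>i\<close> holds the gadget of variable \<open>Suc i\<close> at seeds \<open>16 * i + w\<close>, \<open>w \<in> {1..16}\<close>;
  clause \<open>cls ! j\<close> is the player \<open>C (Suc j)\<close>.\<close>

definition gadget_slot :: "nat \<Rightarrow> nat \<Rightarrow> player option" where
  "gadget_slot i w = (let j = Suc i in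
     if w = 1 then Some (X j) else if w = 2 then Some (false_lit j) else if w = 3 then Some (D j)
     else if w = 4 then Some (DTil j) else if w = 5 then Some (DHat j)
     else if w = 9 then Some (true_lit j) else if w = 10 then clause_slot j 0
     else if w = 11 then clause_slot j 1 else if w = 13 then clause_slot j 2
     else if w = 12 then Some (F (4 * i + 1)) else if w = 14 then Some (F (4 * i + 2))
     else if w = 15 then Some (F (4 * i + 3)) else if w = 16 then Some (F (4 * i + 4))
     else None)"

definition placement :: "nat \<Rightarrow> player option" where
  "placement q =
     (if 0 < q \<and> q \<le> 16 * n then gadget_slot ((q - 1) div 16) ((q - 1) mod 16 + 1) else None)"

lemma placement_gadget:
  assumes "i < n" "0 < w" "w \<le> 16"
  shows "placement (16 * i + w) = gadget_slot i w"
proof -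
  obtain w' where w': "w = Suc w'" "w' < 16"
    using assms(2,3) by (metis Suc_pred' Suc_le_lessD)
  then have "(16 * i + w - 1) div 16 = i" "(16 * i + w - 1) mod 16 + 1 = w"
    by simp_all
  moreover have "16 * i + w \<le> 16 * n"
    using assms by linarith
  ultimately show ?thesis
    using assms(2) by (simp add: placement_def)
qed

definition slot_of :: "player \<Rightarrow> nat \<times> nat" where
  "slot_of y = (case y of
       X j \<Rightarrow> (j - 1, 1) | D j \<Rightarrow> (j - 1, 3) | DTil j \<Rightarrow> (j - 1, 4) | DHat j \<Rightarrow> (j - 1, 5)
     | XT j \<Rightarrow> (j - 1, if a j then 9 else 2) | XF j \<Rightarrow> (j - 1, if a j then 2 else 9)
     | C c \<Rightarrow> (let i = witness (c - 1); ws = witness_list i in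
                   (i - 1, [10, 11, 13] ! the_inv_into {..<length ws} ((!) ws) (c - 1)))
     | F f \<Rightarrow> ((f - 1) div 4, [12, 14, 15, 16] ! ((f - 1) mod 4)))"

lemma slot_of_clause_slot:
  assumes "clause_slot (Suc i) t = Some y"
  shows "slot_of y = (i, [10, 11, 13] ! t)"
proof -
  have t: "t < length (witness_list (Suc i))" and y: "y = C (Suc (witness_list (Suc i) ! t))"
    using assms by (auto simp: clause_slot_def split: if_splits)
  have "witness (witness_list (Suc i) ! t) = Suc i"
    using witness_list_nth[OF t] by (simp add: witnessed_def)
  moreover have "the_inv_into {..<length (witness_list (Suc i))} ((!) (witness_list (Suc i)))
      (witness_list (Suc i) ! t) = t"
    using t by (intro the_inv_into_f_f inj_on_nth) (auto simp: witness_list_def)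
  ultimately show ?thesis
    by (simp add: y slot_of_def)
qed

lemma slot_of_F: "r < 4 \<Longrightarrow> slot_of (F (4 * i + r + 1)) = (i, [12, 14, 15, 16] ! r)"
  by (simp add: slot_of_def)

lemma slot_of_gadget_slot: "gadget_slot i w = Some y \<Longrightarrow> slot_of y = (i, w)"
  using slot_of_F[of 0 i] slot_of_F[of 1 i] slot_of_F[of 2 i] slot_of_F[of 3 i]
  by (auto simp: gadget_slot_def slot_of_def true_lit_def false_lit_def Let_def
      dest: slot_of_clause_slot split: if_splits)

lemma slot_of_placement:
  "placement q = Some y \<Longrightarrow> 0 < q \<and> slot_of y = ((q - 1) div 16, (q - 1) mod 16 + 1)"
  using slot_of_gadget_slot by (auto simp: placement_def split: if_splits)

lemma placement_inj:
  assumes "placement q = Some y" "placement q' = Some y"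
  shows "q = q'"
proof -
  have "0 < q" "0 < q'" "(q - 1) div 16 = (q' - 1) div 16" "(q - 1) mod 16 = (q' - 1) mod 16"
    using slot_of_placement[OF assms(1)] slot_of_placement[OF assms(2)] by auto
  then have "q - 1 = q' - 1"
    by (metis div_mult_mod_eq)
  with \<open>0 < q\<close> \<open>0 < q'\<close> show ?thesis
    by simp
qed

lemma placement_range: "placement q = Some y \<Longrightarrow> 0 < q \<and> q \<le> 16 * n"
  by (simp add: placement_def split: if_splits)

lemma gadget_slot_cases:
  assumes "gadget_slot i w = Some y"
  shows "y \<in> {X (Suc i), false_lit (Suc i), D (Suc i), DTil (Suc i), DHat (Suc i), true_lit (Suc i)}
    \<or> (\<exists>t. clause_slot (Suc i) t = Some y) \<or> (\<exists>r\<in>{1..4}. y = F (4 * i + r))"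
  using assms unfolding gadget_slot_def Let_def by (simp split: if_splits) fastforce+

lemma gadget_slot_in_players:
  assumes "i < n" "gadget_slot i w = Some y"
  shows "y \<in> players n cls"
proof -
  have "{X (Suc i), false_lit (Suc i), D (Suc i), DTil (Suc i), DHat (Suc i), true_lit (Suc i)} \<subseteq> players n cls"
    using assms(1) by (auto simp: players_def true_lit_def false_lit_def)
  moreover have "y' \<in> players n cls" if "clause_slot (Suc i) t = Some y'" for t y'
  proof -
    have "t < length (witness_list (Suc i))" "y' = C (Suc (witness_list (Suc i) ! t))"
      using that by (simp_all add: clause_slot_def split: if_splits)
    then show ?thesis
      using witness_list_nth[of t "Suc i"] by (auto simp: witnessed_def satisfied_def players_def)
  qed
  moreover have "F (4 * i + r) \<in> players n cls" if "r \<in> {1..4}" for r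
  proof -
    have "4 * i + 4 \<le> 10 * n + pad n - length cls"
      using assms(1) length_cls_le by linarith
    then show ?thesis
      using that by (auto simp: players_def)
  qed
  ultimately show ?thesis
    using gadget_slot_cases[OF assms(2)] by blast
qed

lemma placement_in_players:
  assumes "placement q = Some y"
  shows "y \<in> players n cls"
proof -
  have "0 < q" "q \<le> 16 * n" "gadget_slot ((q - 1) div 16) ((q - 1) mod 16 + 1) = Some y"
    using assms by (simp_all add: placement_def split: if_splits)
  moreover from this have "(q - 1) div 16 < n"
    by (simp add: div_less_iff_less_mult)
  ultimately show ?thesis
    using gadget_slot_in_players by blast
qed

lemma placement_covers_high:
  assumes "y \<in> players n cls" "\<not> low y"
  shows "\<exists>q. placement q = Some y"
proof -
  have placed: "\<exists>q. placement q = Some y" if "j \<in> {1..n}" "0 < w" "w \<le> 16" "gadget_slot (j - 1) w = Some y" for j w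
  proof
    have "j - 1 < n"
      using that(1) by auto
    then show "placement (16 * (j - 1) + w) = Some y"
      using that placement_gadget[of "j - 1" w] by simp
  qed
  show ?thesis
  proof (cases y)
    case (XT j)
    then show ?thesis
      using assms placed[of j "if a j then 9 else 2"]
      by (auto simp: players_eq gadget_slot_def true_lit_def false_lit_def)
  next
    case (XF j)
    then show ?thesis
      using assms placed[of j "if a j then 2 else 9"]
      by (auto simp: players_eq gadget_slot_def true_lit_def false_lit_def)
  qed (use assms placed[of _ 1] placed[of _ 3] placed[of _ 4] placed[of _ 5] in
      \<open>auto simp: players_eq gadget_slot_def\<close>)
qed

definition seeding :: "nat \<Rightarrow> player" where
  "seeding = (SOME s. bij_betw s {1..2 ^ nprime n} (players n cls) \<and>
                      (\<forall>q y. placement q = Some y \<longrightarrow> s q = y))"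

lemma seeding:
  "bij_betw seeding {1..2 ^ nprime n} (players n cls)"
  "placement q = Some y \<Longrightarrow> seeding q = y"
proof -
  let ?S = "{q. placement q \<noteq> None}"
  have inj: "inj_on (\<lambda>q. the (placement q)) ?S"
    using placement_inj by (fastforce intro: inj_onI)
  have sub: "?S \<subseteq> {1..2 ^ nprime n}"
    using placement_range nprime_ge[of n] by fastforce
  have img: "(\<lambda>q. the (placement q)) ` ?S \<subseteq> players n cls"
    using placement_in_players by auto
  have fin: "finite (players n cls)"
    by (simp add: players_eq)
  have card: "card {1..2 ^ nprime n :: nat} = card (players n cls)"
    using card_players_eq by simp
  obtain s where "bij_betw s {1..2 ^ nprime n} (players n cls)"
      "\<And>q. q \<in> ?S \<Longrightarrow> s q = the (placement q)"
    by (rule extend_to_bij_betw[OF _ fin card inj sub img]) auto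
  then have "\<exists>s. bij_betw s {1..2 ^ nprime n} (players n cls) \<and>
      (\<forall>q y. placement q = Some y \<longrightarrow> s q = y)"
    by auto
  from someI_ex[OF this] show "bij_betw seeding {1..2 ^ nprime n} (players n cls)"
    and "placement q = Some y \<Longrightarrow> seeding q = y"
    unfolding seeding_def by blast+
qed

lemma seeding_unplaced_low:
  assumes "q \<in> {1..2 ^ nprime n}" "placement q = None"
  shows "low (seeding q)"
proof (rule ccontr)
  assume "\<not> low (seeding q)"
  moreover have "seeding q \<in> players n cls"
    using seeding(1) assms(1) by (auto simp: bij_betw_def)
  ultimately obtain q' where q': "placement q' = Some (seeding q)"
    using placement_covers_high by blast
  then have "q' \<in> {1..2 ^ nprime n}"
    using placement_range nprime_ge[of n] by fastforce
  moreover have "seeding q' = seeding q"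
    using seeding(2)[OF q'] .
  ultimately have "q' = q"
    using bij_betw_imp_inj_on[OF seeding(1)] assms(1) by (simp add: inj_on_eq_iff)
  with q' assms(2) show False
    by simp
qed

lemma seeding_low_beyond: "16 * n < q \<Longrightarrow> q \<le> 2 ^ nprime n \<Longrightarrow> low (seeding q)"
  by (intro seeding_unplaced_low) (auto simp: placement_def)

lemma variable_gadget_seeding:
  assumes "i < n"
  shows "variable_gadget n cls (Suc i) (\<lambda>q. seeding (16 * i + q)) (card (witnessed (Suc i)))"
proof
  let ?g = "\<lambda>q. seeding (16 * i + q)"
  have slot: "?g w = y" if "0 < w" "w \<le> 16" "gadget_slot i w = Some y" for w y
    using that assms placement_gadget seeding(2) by simp
  have free: "low (?g w)" if "0 < w" "w \<le> 16" "gadget_slot i w = None" for w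
  proof (rule seeding_unplaced_low)
    have "16 * i + w \<le> 16 * n"
      using that assms by linarith
    then show "16 * i + w \<in> {1..2 ^ nprime n}"
      using that nprime_ge[of n] by simp
    show "placement (16 * i + w) = None"
      using that assms placement_gadget by simp
  qed
  show "Suc i \<in> {1..n}"
    using assms by simp
  show "?g 1 = X (Suc i)" "?g 3 = D (Suc i)" "?g 4 = DTil (Suc i)" "?g 5 = DHat (Suc i)"
    by (rule slot; simp add: gadget_slot_def)+
  have "?g 2 = false_lit (Suc i)" "?g 9 = true_lit (Suc i)"
    by (rule slot; simp add: gadget_slot_def)+
  then show "{?g 2, ?g 9} = {XT (Suc i), XF (Suc i)}"
    by (auto simp: true_lit_def false_lit_def)
  show "low (?g q)" if "q \<in> {6, 7, 8, 10, 11, 13}" for q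
  proof (cases "gadget_slot i q")
    case (Some y)
    with that have "low y"
      by (auto simp: gadget_slot_def clause_slot_def split: if_splits)
    with Some that show ?thesis
      using slot[of q y] by auto
  qed (use that free in auto)
  show "\<exists>f>0. ?g q = F f" if "q \<in> {12, 14, 15, 16}" for q
    using that slot[of q] by (auto simp: gadget_slot_def)
  show "card (witnessed (Suc i)) \<le> 3"
    by (rule card_witnessed_le)
  show "\<exists>c\<in>{1..length cls}. ?g ([10, 11, 13] ! t) = C c \<and> one_pair cls (C c) (?g 9)"
    if "t < card (witnessed (Suc i))" for t
  proof (intro bexI conjI)
    let ?c = "Suc (witness_list (Suc i) ! t)"
    have t: "t < length (witness_list (Suc i))"
      using that by (simp add: length_witness_list)
    have "t = 0 \<or> t = 1 \<or> t = 2"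
      using that card_witnessed_le[of "Suc i"] by linarith
    then have "gadget_slot i ([10, 11, 13] ! t) = clause_slot (Suc i) t" "[10, 11, 13 :: nat] ! t \<in> {10, 11, 13}"
      by (auto simp: gadget_slot_def)
    then show "?g ([10, 11, 13] ! t) = C ?c"
      using t by (intro slot) (auto simp: clause_slot_def)
    have "?g 9 = true_lit (Suc i)"
      by (rule slot; simp add: gadget_slot_def)
    then show "one_pair cls (C ?c) (?g 9)"
      using witnessed_one_pair[OF witness_list_nth[OF t]] by simp
    show "?c \<in> {1..length cls}"
      using witness_list_nth[OF t] by (simp add: witnessed_def satisfied_def)
  qed
qed

lemma gadget_winner_not_DX:
  assumes "i < 2 ^ (nprime n - 4)" "0 < n"
  shows "\<not> is_DX (winner (stronger n cls) seeding 4 i)"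
proof (cases "i < n")
  case True
  have "winner (stronger n cls) seeding 4 i = winner (stronger n cls) (\<lambda>q. seeding (16 * i + q)) 4 0"
    using winner_shift[of "stronger n cls" seeding 4 i 0] by (simp add: mult.commute)
  also have "\<dots> = DHat (Suc i)"
    by (rule variable_gadget.win_DHat(3)[OF variable_gadget_seeding[OF True]])
  finally show ?thesis
    by simp
next
  case False
  obtain q where q: "winner (stronger n cls) seeding 4 i = seeding q" "i * 2 ^ 4 < q" "q \<le> (i + 1) * 2 ^ 4"
    using winner_mem[of "stronger n cls" seeding 4 i] by fastforce
  moreover have "(i + 1) * 2 ^ 4 \<le> 2 ^ nprime n"
    using block_end_le_pow[OF assms(1)] nprime_ge_4[OF assms(2)] by simp
  ultimately have "low (seeding q)"
    using False by (intro seeding_low_beyond) auto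
  with q(1) show ?thesis
    by (simp add: low_not_DX)
qed

theorem seeding_value_ge:
  "int (n + card satisfied) \<le> tournament_value (game_value cls) (stronger n cls) seeding (nprime n)"
proof (cases "n = 0")
  case True
  then have "card satisfied = 0" "nprime n = 0"
    using card_satisfied by (simp_all add: nprime_def)
  with True show ?thesis
    by (simp add: tournament_value_def)
next
  case False
  let ?N = "nprime n" and ?v = "game_value cls" and ?st = "stronger n cls"
  let ?G = "\<lambda>i. tournament_value ?v ?st (\<lambda>q. seeding (16 * i + q)) 4"
  have N: "4 \<le> ?N"
    using False by (simp add: nprime_ge_4)
  have "(2::nat) ^ ?N = 2 ^ 4 * 2 ^ (?N - 4)"
    using N by (metis le_add_diff_inverse power_add)
  then have n_le: "n \<le> 2 ^ (?N - 4)"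
    using nprime_ge[of n] by simp
  have G_nonneg: "0 \<le> ?G i" if "n \<le> i" "i < 2 ^ (?N - 4)" for i
  proof (rule tournament_value_nonneg)
    fix q q' :: nat assume "0 < q" "q \<le> 2 ^ 4" "0 < q'" "q' \<le> 2 ^ 4"
    moreover have "16 * i + 16 \<le> 2 ^ ?N"
      using block_end_le_pow[OF that(2) N] by simp
    ultimately have "low (seeding (16 * i + q))" "low (seeding (16 * i + q'))"
      using that(1) by (auto intro!: seeding_low_beyond)
    then show "0 \<le> ?v (seeding (16 * i + q)) (seeding (16 * i + q'))"
      by (simp add: game_value_nonneg low_not_DX)
  qed
  have upper_nonneg: "0 \<le> tournament_value ?v ?st (\<lambda>q. winner ?st seeding 4 (q - 1)) (?N - 4)"
    using gadget_winner_not_DX False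
    by (intro tournament_value_nonneg game_value_nonneg) auto
  have "int (n + card satisfied) = (\<Sum>i<n. int (1 + card (witnessed (Suc i))))"
    by (simp add: card_satisfied sum.atLeast1_atMost_eq sum.distrib)
  also have "\<dots> \<le> (\<Sum>i<n. ?G i)"
    by (rule sum_mono, rule variable_gadget.tournament_value_ge[OF variable_gadget_seeding]) simp
  also have "\<dots> \<le> (\<Sum>i<2 ^ (?N - 4). ?G i)"
    using n_le G_nonneg by (intro sum_mono2) auto
  also have "\<dots> \<le> tournament_value ?v ?st seeding ?N"
    using tournament_value_split[OF N, of ?v ?st seeding] upper_nonneg by (simp add: mult.commute)
  finally show ?thesis .
qed

end

theorem lemma3:
  fixes n k :: nat and cls :: "clause list" and a :: "nat \<Rightarrow> bool"
  assumes "max23sat_instance n cls"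
    and "k \<le> num_sat cls a"
  shows "\<exists>\<sigma>. bij_betw \<sigma> (players n cls) {1..2 ^ nprime n} \<and>
             int (k + n) \<le> T_value n cls \<sigma>"
proof -
  interpret reduction n cls a
    using assms(1) by unfold_locales
  define \<sigma> where "\<sigma> = inv_into {1..2 ^ nprime n} seeding"
  have "bij_betw \<sigma> (players n cls) {1..2 ^ nprime n}"
    unfolding \<sigma>_def by (rule bij_betw_inv_into[OF seeding(1)])
  moreover have "T_value n cls \<sigma> = tournament_value (game_value cls) (stronger n cls) seeding (nprime n)"
    unfolding T_value_def \<sigma>_def
    by (rule tournament_value_cong, rule inv_into_inv_into_eq[OF seeding(1)]) simp
  moreover have "k \<le> card satisfied"
    using assms(2) by (simp add: num_sat_def satisfied_def)
  ultimately show ?thesis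
    using seeding_value_ge by fastforce
qed

end
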